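(* Let $n\ge 1$, let $\Pi^n=(t_{\underline{k}})_{\underline{k}\in\mathbb{Z}^n}$ be a node sequence as described in the context, and let $\chi:\mathbb{R}\to\mathbb{R}$ be a one-dimensional kernel (with respect to each of the coordinate sequences $(t_{k_i})_{k_i\in\mathbb{Z}}$, $i=1,\dots,n$). Let $X(\underline{x}):=\prod_{i=1}^n\chi(x_i)$. Assume that $$\chi(x)=\mathcal{O}(|x|^{-2})\quad\text{as } |x|\to+\infty,$$ and that $m_{1,\Pi}(\chi)=+\infty$. Then there exists a constant $K>0$ depending only on the kernel $X$ (and the nodes) such that for every $f\in C(\mathbb{R}^n)$ (uniformly continuous and bounded) $$\|K^X_w f-f\|_\infty\le K\left[\omega\!\left(f,\frac{\log w}{w}\right)+\frac{\|f\|_\infty}{w}\right]$$ for every sufficiently large $w>0$.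
   Context: Nodes: for each $i=1,\dots,n$, $(t_{k_i})_{k_i\in\mathbb{Z}}$ is a strictly increasing real sequence with $t_{k_i}\to\pm\infty$ as $k_i\to\pm\infty$, and there are constants $0<\delta\le\Delta$ with $\delta\le \Delta_{k_i}:=t_{k_i+1}-t_{k_i}\le\Delta$ for all $k_i$ and all $i$. For $\underline{k}=(k_1,\dots,k_n)\in\mathbb{Z}^n$ set $t_{\underline{k}}=(t_{k_1},\dots,t_{k_n})$, $A_{\underline{k}}:=\Delta_{k_1}\cdots\Delta_{k_n}$, and for $w>0$, $R^w_{\underline{k}}:=[t_{k_1}/w,t_{k_1+1}/w]\times\cdots\times[t_{k_n}/w,t_{k_n+1}/w]$ (of Lebesgue measure $A_{\underline{k}}/w^n$). Kernel: a function $X:\mathbb{R}^n\to\mathbb{R}$ is a kernel (w.r.t. the nodes) if ($\chi1$) $X\in L^1(\mathbb{R}^n)$ and $X$ is bounded in a neighborhood of $\underline 0$; ($\chi2$) $\sum_{\underline{k}\in\mathbb{Z}^n}X(\underline{x}-t_{\underline{k}})=1$ for every $\underline{x}\in\mathbb{R}^n$; ($\chi3$) for some $\beta>0$, $m_{\beta,\Pi^n}(X):=\sup_{\underline{x}\in\mathbb{R}^n}\sum_{\underline{k}\in\mathbb{Z}^n}|X(\underline{x}-t_{\underline{k}})|\,\|\underline{x}-t_{\underline{k}}\|_2^\beta<+\infty$. A one-dimensional kernel is the case $n=1$, with moments denoted $m_{\beta,\Pi}(\chi)=\sup_{x\in\mathbb{R}}\sum_{k}|\chi(x-t_k)||x-t_k|^\beta$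 (for $\beta\ge 0$). Sampling Kantorovich operators: for a locally integrable $f:\mathbb{R}^n\to\mathbb{R}$ such that the series converges, $$(K^X_w f)(\underline{x}):=\sum_{\underline{k}\in\mathbb{Z}^n}X(w\underline{x}-t_{\underline{k}})\,\frac{w^n}{A_{\underline{k}}}\int_{R^w_{\underline{k}}}f(\underline{u})\,d\underline{u},\qquad \underline{x}\in\mathbb{R}^n,\ w>0.$$ $C(\mathbb{R}^n)$ denotes the space of uniformly continuous and bounded functions on $\mathbb{R}^n$, with sup norm $\|\cdot\|_\infty$, and $\omega(f,\delta):=\sup_{\|\underline{t}\|_2\le\delta}\sup_{\underline{x}}|f(\underline{x}+\underline{t})-f(\underline{x})|$ is its modulus of continuity. *)

theory Defs
  imports "HOL-Analysis.Analysis" "HOL-Library.Landau_Symbols"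
begin

definition node_seq :: "('n::finite \<Rightarrow> int \<Rightarrow> real) \<Rightarrow> bool" where
  "node_seq t \<longleftrightarrow> (\<exists>\<delta> \<Delta>. 0 < \<delta> \<and> \<delta> \<le> \<Delta> \<and>
     (\<forall>i. strict_mono (t i) \<and> filterlim (t i) at_top at_top \<and> filterlim (t i) at_bot at_bot \<and>
          (\<forall>k. \<delta> \<le> t i (k + 1) - t i k \<and> t i (k + 1) - t i k \<le> \<Delta>)))"

definition moment1 :: "(int \<Rightarrow> real) \<Rightarrow> (real \<Rightarrow> real) \<Rightarrow> real \<Rightarrow> ennreal" where
  "moment1 s chi \<beta> = (SUP x. (\<Sum>\<^sub>\<infinity>k\<in>UNIV. ennreal (\<bar>chi (x - s k)\<bar> * \<bar>x - s k\<bar> powr \<beta>)))"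

definition kernel1 :: "(int \<Rightarrow> real) \<Rightarrow> (real \<Rightarrow> real) \<Rightarrow> bool" where
  "kernel1 s chi \<longleftrightarrow>
     integrable lborel chi \<and>
     (\<exists>e>0. \<exists>B. \<forall>x. \<bar>x\<bar> < e \<longrightarrow> \<bar>chi x\<bar> \<le> B) \<and>
     (\<forall>x. ((\<lambda>k. chi (x - s k)) has_sum 1) UNIV) \<and>
     (\<exists>\<beta>>0. moment1 s chi \<beta> < \<infinity>)"

definition node_vec :: "('n::finite \<Rightarrow> int \<Rightarrow> real) \<Rightarrow> ('n \<Rightarrow> int) \<Rightarrow> real^'n" where
  "node_vec t k = (\<chi> i. t i (k i))"

definition cell_area :: "('n::finite \<Rightarrow> int \<Rightarrow> real) \<Rightarrow> ('n \<Rightarrow> int) \<Rightarrow> real" where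
  "cell_area t k = (\<Prod>i\<in>UNIV. t i (k i + 1) - t i (k i))"

definition cell :: "('n::finite \<Rightarrow> int \<Rightarrow> real) \<Rightarrow> real \<Rightarrow> ('n \<Rightarrow> int) \<Rightarrow> (real^'n) set" where
  "cell t w k = cbox (\<chi> i. t i (k i) / w) (\<chi> i. t i (k i + 1) / w)"

definition kantorovich ::
  "('n::finite \<Rightarrow> int \<Rightarrow> real) \<Rightarrow> (real^'n \<Rightarrow> real) \<Rightarrow> real \<Rightarrow> (real^'n \<Rightarrow> real) \<Rightarrow> real^'n \<Rightarrow> real" where
  "kantorovich t X w f x =
     (\<Sum>\<^sub>\<infinity>k\<in>UNIV. X (w *\<^sub>R x - node_vec t k) * (w ^ CARD('n) / cell_area t k) * integral (cell t w k) f)"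

definition modcont :: "(real^'n::finite \<Rightarrow> real) \<Rightarrow> real \<Rightarrow> real" where
  "modcont f \<delta> = Sup {\<bar>f (x + s) - f x\<bar> | x s. norm s \<le> \<delta>}"

definition supnorm :: "(real^'n::finite \<Rightarrow> real) \<Rightarrow> real" where
  "supnorm f = (SUP x. \<bar>f x\<bar>)"

end

theory Submission
  imports Defs
begin

text \<open>
  Each coordinate kernel is a partition of unity, hence so is the product kernel \<open>X\<close>, and
  \<open>K\<^sub>w f x - f x\<close> is the \<open>X (w x - t\<^sub>k)\<close>-weighted average of the deviations of the cell means of \<open>f\<close>
  from \<open>f x\<close>. If all offsets \<open>u\<^sub>i = w x\<^sub>i - t\<^sub>k\<^sub>i\<close> satisfy \<open>\<bar>u\<^sub>i\<bar> \<le> w\<close>, the cell lies within distance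
  \<open>(\<Sum>\<^sub>i \<bar>u\<^sub>i\<bar> + n\<Delta>) / w\<close> of \<open>x\<close>, and subadditivity of the modulus of continuity at scale
  \<open>ln w / w\<close> bounds the deviation by \<open>\<omega>(f, ln w / w) (1 + (n\<Delta> + \<Sum>\<^sub>i \<bar>u\<^sub>i\<bar>) / ln w)\<close>; any other cell
  deviates by at most \<open>2 \<parallel>f\<parallel>\<^sub>\<infinity>\<close>. Because the nodes are \<open>\<delta>\<close>-separated and \<open>\<chi>(u) = O(u\<^sup>-\<^sup>2)\<close>, uniformly
  in the position the truncated first moment \<open>\<Sum>\<^bsub>\<bar>u\<^sub>k\<bar> \<le> w\<^esub> \<bar>\<chi>(u\<^sub>k)\<bar> \<bar>u\<^sub>k\<bar>\<close> is a harmonic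
  sum of order \<open>ln w\<close> and the tail \<open>\<Sum>\<^bsub>\<bar>u\<^sub>k\<bar> > w\<^esub> \<bar>\<chi>(u\<^sub>k)\<bar>\<close> is \<open>O(1/w)\<close>; the product structure of \<open>X\<close>
  carries these one-dimensional bounds over to \<open>\<real>\<^sup>n\<close>.
\<close>

section \<open>Sums over separated nodes\<close>

lemma nonneg_summable_on_infsum_le:
  fixes f :: "'a \<Rightarrow> real"
  assumes "\<And>x. x \<in> A \<Longrightarrow> 0 \<le> f x" and "\<And>F. finite F \<Longrightarrow> F \<subseteq> A \<Longrightarrow> sum f F \<le> b"
  shows "f summable_on A \<and> infsum f A \<le> b"
proof -
  have "f summable_on A"
    by (rule nonneg_bdd_above_summable_on) (use assms in \<open>auto intro!: bdd_aboveI\<close>)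
  then show ?thesis using infsum_le_finite_sums assms by blast
qed

lemma nat_floor_divide_bounds:
  fixes a \<delta> :: real
  assumes "0 < \<delta>" "0 \<le> a"
  shows "real (nat \<lfloor>a / \<delta>\<rfloor>) * \<delta> \<le> a" "a < (real (nat \<lfloor>a / \<delta>\<rfloor>) + 1) * \<delta>"
proof -
  have eq: "real (nat \<lfloor>a / \<delta>\<rfloor>) = real_of_int \<lfloor>a / \<delta>\<rfloor>" using assms by simp
  show "real (nat \<lfloor>a / \<delta>\<rfloor>) * \<delta> \<le> a"
    using assms eq of_int_floor_le[of "a / \<delta>"] by (simp add: le_divide_eq)
  show "a < (real (nat \<lfloor>a / \<delta>\<rfloor>) + 1) * \<delta>"
    using assms by (simp add: pos_divide_less_eq[symmetric])
qed

lemma node_gap_le: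
  fixes s :: "int \<Rightarrow> real"
  assumes gap: "\<And>k. s k + \<delta> \<le> s (k + 1)" and "0 < \<delta>" and "k < k'"
  shows "s k + \<delta> \<le> s k'"
proof -
  have "s k + \<delta> \<le> s (k + 1 + int n)" for n
  proof (induction n)
    case 0
    then show ?case using gap by simp
  next
    case (Suc n)
    then show ?case using gap[of "k + 1 + int n"] \<open>0 < \<delta>\<close> by (simp add: add.assoc)
  qed
  moreover obtain n where "k' = k + 1 + int n"
    using \<open>k < k'\<close> by (metis add.commute zless_iff_Suc_zadd of_nat_Suc add.left_commute)
  ultimately show ?thesis by simp
qed

text \<open>\<open>nat \<lfloor>\<bar>x - s k\<bar> / \<delta>\<rfloor>\<close> indexes the interval \<open>[j\<delta>, (j+1)\<delta>)\<close> containing the distance from \<open>x\<close> to the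
  node \<open>s k\<close>; on each side of \<open>x\<close> it is injective because the nodes are \<open>\<delta>\<close>-separated.\<close>

lemma node_distance_index_neq:
  fixes s :: "int \<Rightarrow> real"
  assumes gap: "\<And>k. s k + \<delta> \<le> s (k + 1)" and "0 < \<delta>" and "k \<noteq> k'"
    and same_side: "x \<le> s k \<and> x \<le> s k' \<or> s k < x \<and> s k' < x"
  shows "nat \<lfloor>\<bar>x - s k\<bar> / \<delta>\<rfloor> \<noteq> nat \<lfloor>\<bar>x - s k'\<bar> / \<delta>\<rfloor>"
proof -
  have floor_lt: "nat \<lfloor>a / \<delta>\<rfloor> < nat \<lfloor>b / \<delta>\<rfloor>" if "0 \<le> a" "a + \<delta> \<le> b" for a b
  proof -
    have "a / \<delta> + 1 \<le> b / \<delta>"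
      using that divide_right_mono[of "a + \<delta>" b \<delta>] \<open>0 < \<delta>\<close> by (simp add: add_divide_distrib)
    then have "\<lfloor>a / \<delta>\<rfloor> + 1 \<le> \<lfloor>b / \<delta>\<rfloor>" by (metis floor_add_int floor_mono of_int_1)
    moreover have "0 \<le> \<lfloor>a / \<delta>\<rfloor>" using that \<open>0 < \<delta>\<close> by simp
    ultimately show ?thesis by linarith
  qed
  have "\<bar>x - s l\<bar> + \<delta> \<le> \<bar>x - s l'\<bar> \<or> \<bar>x - s l'\<bar> + \<delta> \<le> \<bar>x - s l\<bar>" if "l < l'"
    and "x \<le> s l \<and> x \<le> s l' \<or> s l < x \<and> s l' < x" for l l'
    using node_gap_le[of s \<delta>, OF gap \<open>0 < \<delta>\<close> \<open>l < l'\<close>] that(2) by auto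
  then have "\<bar>x - s k\<bar> + \<delta> \<le> \<bar>x - s k'\<bar> \<or> \<bar>x - s k'\<bar> + \<delta> \<le> \<bar>x - s k\<bar>"
    using same_side \<open>k \<noteq> k'\<close> by (metis linorder_neqE_linordered_idom)
  then show ?thesis using floor_lt by (metis abs_ge_zero less_irrefl)
qed

lemma node_sum_le:
  fixes s :: "int \<Rightarrow> real" and h :: "int \<Rightarrow> real" and G :: "nat \<Rightarrow> real"
  assumes gap: "\<And>k. s k + \<delta> \<le> s (k + 1)" and "0 < \<delta>"
    and G_sums: "\<And>J. finite J \<Longrightarrow> sum G J \<le> b"
    and h: "\<And>k. 0 \<le> h k \<and> h k \<le> G (nat \<lfloor>\<bar>x - s k\<bar> / \<delta>\<rfloor>)"
  shows "h summable_on UNIV \<and> infsum h UNIV \<le> 2 * b"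
proof (rule nonneg_summable_on_infsum_le)
  define idx where "idx k = nat \<lfloor>\<bar>x - s k\<bar> / \<delta>\<rfloor>" for k
  have side_sum: "sum h (F \<inter> S) \<le> b"
    if "finite F" and S: "\<And>k k'. k \<in> S \<Longrightarrow> k' \<in> S \<Longrightarrow> x \<le> s k \<and> x \<le> s k' \<or> s k < x \<and> s k' < x"
    for F S
  proof -
    have "inj_on idx (F \<inter> S)"
      unfolding idx_def using node_distance_index_neq[of s \<delta>, OF gap \<open>0 < \<delta>\<close>] S by (meson IntD2 inj_onI)
    have "sum h (F \<inter> S) \<le> sum (G \<circ> idx) (F \<inter> S)"
      using h by (auto intro: sum_mono simp: idx_def)
    also have "\<dots> = sum G (idx ` (F \<inter> S))" using \<open>inj_on idx (F \<inter> S)\<close> by (simp add: sum.reindex)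
    also have "\<dots> \<le> b" using G_sums that(1) by simp
    finally show ?thesis .
  qed
  fix F :: "int set" assume "finite F"
  have "sum h F = sum h (F \<inter> {k. x \<le> s k}) + sum h (F \<inter> {k. s k < x})"
    using \<open>finite F\<close> by (subst sum.union_disjoint[symmetric]) (auto intro: sum.cong)
  also have "\<dots> \<le> b + b" by (intro add_mono side_sum \<open>finite F\<close>) auto
  finally show "sum h F \<le> 2 * b" by simp
qed (use h in auto)

lemma sum_inverse_square_le:
  fixes J :: nat
  assumes "1 \<le> J" and "finite F" and "F \<subseteq> {J..}"
  shows "(\<Sum>j\<in>F. 1 / (real j)\<^sup>2) \<le> 2 / real J"
proof (cases "F = {}")
  case False
  define N where "N = Max F"
  have F_sub: "F \<subseteq> {J..N}" using assms False unfolding N_def by auto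
  have term_le: "1 / (real j)\<^sup>2 \<le> 2 * ((- 1 / real (Suc j)) - (- 1 / real j))" if "1 \<le> j" for j
  proof -
    have "(1 + real j) * real j \<le> 2 * (real j)\<^sup>2"
      using that by (simp add: power2_eq_square algebra_simps mult_le_cancel_left1)
    then show ?thesis using that by (simp add: divide_simps)
  qed
  have "(\<Sum>j\<in>F. 1 / (real j)\<^sup>2) \<le> (\<Sum>j\<in>{J..N}. 1 / (real j)\<^sup>2)"
    by (rule sum_mono2) (use F_sub in auto)
  also have "\<dots> \<le> (\<Sum>j\<in>{J..N}. 2 * ((- 1 / real (Suc j)) - (- 1 / real j)))"
    by (rule sum_mono) (use assms term_le in auto)
  also have "\<dots> = 2 * (\<Sum>j\<in>{J..N}. (- 1 / real (Suc j)) - (- 1 / real j))"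
    by (simp add: sum_distrib_left)
  also have "\<dots> = 2 * (1 / real J - 1 / real (Suc N))"
    using sum_Suc_diff[of J N "\<lambda>j. - 1 / real j"] F_sub False by auto
  also have "\<dots> \<le> 2 / real J" by simp
  finally show ?thesis .
qed simp

lemma harm_le_one_plus_ln: "harm n \<le> 1 + ln (real n)"
  using euler_mascheroni_sequence_decreasing[of 1 n] by (cases "n = 0") (auto simp: harm_def)

section \<open>Kernels with quadratic decay\<close>

lemma moment1_term_le: "ennreal (\<bar>chi u\<bar> * \<bar>u\<bar> powr \<beta>) \<le> moment1 s chi \<beta>"
proof -
  let ?g = "\<lambda>k. ennreal (\<bar>chi (u + s 0 - s k)\<bar> * \<bar>u + s 0 - s k\<bar> powr \<beta>)"
  have "?g 0 = infsum ?g {0}" by simp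
  also have "\<dots> \<le> infsum ?g UNIV"
    by (rule infsum_mono_neutral) (auto intro: nonneg_summable_on_complete)
  also have "\<dots> \<le> moment1 s chi \<beta>" unfolding moment1_def by (rule SUP_upper) simp
  finally show ?thesis by simp
qed

lemma kernel1_bounded:
  assumes "kernel1 s chi"
  obtains B where "\<And>u. \<bar>chi u\<bar> \<le> B"
proof -
  obtain e B\<^sub>0 \<beta> where "e > 0" and near_0: "\<And>u. \<bar>u\<bar> < e \<Longrightarrow> \<bar>chi u\<bar> \<le> B\<^sub>0"
    and "\<beta> > 0" and finite_moment: "moment1 s chi \<beta> < \<infinity>"
    using assms unfolding kernel1_def by blast
  define M where "M = enn2real (moment1 s chi \<beta>)"
  have "moment1 s chi \<beta> = ennreal M" and "0 \<le> M"
    using finite_moment unfolding M_def by (simp_all add: ennreal_enn2real_if less_top)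
  then have term_le: "\<bar>chi u\<bar> * \<bar>u\<bar> powr \<beta> \<le> M" for u
    using moment1_term_le[of chi u \<beta> s] by (simp add: ennreal_le_iff)
  have "\<bar>chi u\<bar> \<le> max B\<^sub>0 (M / e powr \<beta>)" for u
  proof (cases "\<bar>u\<bar> < e")
    case False
    then have "e powr \<beta> \<le> \<bar>u\<bar> powr \<beta>" using \<open>e > 0\<close> \<open>\<beta> > 0\<close> by (intro powr_mono2) auto
    then have "\<bar>chi u\<bar> * e powr \<beta> \<le> M" using term_le[of u] by (meson abs_ge_zero mult_left_mono order_trans)
    then have "\<bar>chi u\<bar> \<le> M / e powr \<beta>" using \<open>e > 0\<close> by (simp add: le_divide_eq)
    then show ?thesis by simp
  qed (use near_0 in force)
  then show ?thesis using that by blast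
qed

lemma bigo_inverse_square_decay:
  fixes chi :: "real \<Rightarrow> real"
  assumes "chi \<in> O[at_infinity](\<lambda>x. 1 / x ^ 2)"
  obtains C R where "R > 0" and "\<And>u. R \<le> \<bar>u\<bar> \<Longrightarrow> \<bar>chi u\<bar> \<le> C / u\<^sup>2"
proof -
  obtain c where "eventually (\<lambda>x. norm (chi x) \<le> c * norm (1 / x ^ 2)) at_infinity"
    using assms unfolding bigo_def by blast
  then obtain b where b: "\<And>x. b \<le> norm x \<Longrightarrow> norm (chi x) \<le> c * norm (1 / x ^ 2)"
    unfolding eventually_at_infinity by blast
  show ?thesis
    by (rule that[of "max b 1" c]) (use b in \<open>auto simp: divide_inverse\<close>)
qed

locale decaying_kernel =
  fixes s :: "int \<Rightarrow> real" and \<delta> :: real and chi :: "real \<Rightarrow> real" and B C R :: real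
  assumes node_gap: "\<And>k. s k + \<delta> \<le> s (k + 1)" and delta_pos: "0 < \<delta>" and R_pos: "0 < R"
    and bounded: "\<And>u. \<bar>chi u\<bar> \<le> B"
    and decay: "\<And>u. R \<le> \<bar>u\<bar> \<Longrightarrow> \<bar>chi u\<bar> \<le> C / u\<^sup>2"
begin

lemma B_nonneg: "0 \<le> B"
  using bounded[of 0] by linarith

lemma C_nonneg: "0 \<le> C"
proof -
  have "0 \<le> C / R\<^sup>2" using decay[of R] R_pos abs_ge_zero[of "chi R"] by (auto intro: order_trans)
  then show ?thesis using R_pos by (simp add: zero_le_divide_iff)
qed

lemma decay_le:
  assumes "R \<le> a" "a \<le> \<bar>u\<bar>"
  shows "\<bar>chi u\<bar> \<le> C / a\<^sup>2"
proof -
  have "\<bar>chi u\<bar> \<le> C / u\<^sup>2" using decay assms by force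
  also have "\<dots> \<le> C / a\<^sup>2"
    using assms R_pos C_nonneg by (intro divide_left_mono) (auto simp: abs_le_square_iff[symmetric])
  finally show ?thesis .
qed

lemma decay_first_moment_le:
  assumes "R \<le> a" "a \<le> \<bar>u\<bar>"
  shows "\<bar>chi u\<bar> * \<bar>u\<bar> \<le> C / a"
proof -
  have "\<bar>chi u\<bar> * \<bar>u\<bar> \<le> C / \<bar>u\<bar>\<^sup>2 * \<bar>u\<bar>"
    using decay_le[of "\<bar>u\<bar>" u] assms by (intro mult_right_mono) auto
  also have "\<dots> = C / \<bar>u\<bar>"
  proof -
    have cancel: "C / v\<^sup>2 * v = C / v" if "0 < v" for v :: real using that by (simp add: power2_eq_square)
    show ?thesis by (rule cancel) (use assms R_pos in linarith)
  qed
  also have "\<dots> \<le> C / a" using assms R_pos C_nonneg by (intro divide_left_mono) auto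
  finally show ?thesis .
qed

lemma card_near_indices_le: "card (F \<inter> {j. real j * \<delta> < R}) \<le> R / \<delta> + 1"
proof -
  have "F \<inter> {j. real j * \<delta> < R} \<subseteq> {..< nat \<lceil>R / \<delta>\<rceil>}"
    using delta_pos by (auto simp: less_ceiling_iff zless_nat_eq_int_zless pos_less_divide_eq)
  then have "card (F \<inter> {j. real j * \<delta> < R}) \<le> nat \<lceil>R / \<delta>\<rceil>"
    by (metis card_lessThan card_mono finite_lessThan)
  also have "real (nat \<lceil>R / \<delta>\<rceil>) \<le> R / \<delta> + 1"
    using R_pos delta_pos of_int_ceiling_le_add_one[of "R / \<delta>"] by simp
  finally show ?thesis by linarith
qed

lemma distance_index_bounds:
  "real (nat \<lfloor>\<bar>u\<bar> / \<delta>\<rfloor>) * \<delta> \<le> \<bar>u\<bar>" "\<bar>u\<bar> < (real (nat \<lfloor>\<bar>u\<bar> / \<delta>\<rfloor>) + 1) * \<delta>"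
  using nat_floor_divide_bounds[OF delta_pos, of "\<bar>u\<bar>"] by auto

lemma sum_abs_kernel_le:
  "(\<lambda>k. \<bar>chi (x - s k)\<bar>) summable_on UNIV \<and>
   infsum (\<lambda>k. \<bar>chi (x - s k)\<bar>) UNIV \<le> 2 * (B * (R / \<delta> + 1) + 2 * C / \<delta>\<^sup>2)"
proof (rule node_sum_le[where s = s and \<delta> = \<delta>, OF node_gap delta_pos])
  define G where "G j = B * of_bool (real j * \<delta> < R) + C / (real j * \<delta>)\<^sup>2 * of_bool (R \<le> real j * \<delta>)"
    for j :: nat
  show "sum G F \<le> B * (R / \<delta> + 1) + 2 * C / \<delta>\<^sup>2" if "finite F" for F
  proof -
    let ?far = "F \<inter> {j. R \<le> real j * \<delta>}"
    have "sum G F = B * card (F \<inter> {j. real j * \<delta> < R}) + C / \<delta>\<^sup>2 * (\<Sum>j\<in>?far. 1 / (real j)\<^sup>2)"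
      unfolding G_def sum.distrib sum_mult_of_bool_eq[OF that]
      by (simp add: sum_distrib_left power_mult_distrib mult.commute)
    also have "\<dots> \<le> B * (R / \<delta> + 1) + C / \<delta>\<^sup>2 * (2 / real (1::nat))"
    proof (intro add_mono mult_left_mono sum_inverse_square_le)
      show "?far \<subseteq> {1..}" using R_pos by (auto simp: Suc_le_eq intro!: Nat.gr0I)
    qed (use card_near_indices_le B_nonneg C_nonneg that in auto)
    finally show ?thesis by (simp add: mult.commute)
  qed
  show "0 \<le> \<bar>chi (x - s k)\<bar> \<and> \<bar>chi (x - s k)\<bar> \<le> G (nat \<lfloor>\<bar>x - s k\<bar> / \<delta>\<rfloor>)" for k
    unfolding G_def using bounded decay_le distance_index_bounds by auto
qed

lemma sum_inverse_mid_indices_le: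
  assumes "\<delta> \<le> w" "1 / \<delta> \<le> w" "1 \<le> ln w"
  shows "(\<Sum>j\<in>F \<inter> {j. R \<le> real j * \<delta> \<and> real j * \<delta> \<le> w}. 1 / real j) \<le> 3 * ln w"
proof -
  let ?N = "nat \<lfloor>w / \<delta>\<rfloor>"
  have "0 < w" using assms delta_pos by linarith
  have "F \<inter> {j. R \<le> real j * \<delta> \<and> real j * \<delta> \<le> w} \<subseteq> {1..?N}"
  proof
    fix j assume "j \<in> F \<inter> {j. R \<le> real j * \<delta> \<and> real j * \<delta> \<le> w}"
    then have j: "R \<le> real j * \<delta>" "real j \<le> w / \<delta>" using delta_pos by (auto simp: le_divide_eq)
    then have "j \<noteq> 0" using R_pos by (cases "j = 0") auto
    moreover have "int j \<le> \<lfloor>w / \<delta>\<rfloor>" using j(2) by (metis floor_mono floor_of_nat)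
    ultimately show "j \<in> {1..?N}" by auto
  qed
  then have "(\<Sum>j\<in>F \<inter> {j. R \<le> real j * \<delta> \<and> real j * \<delta> \<le> w}. 1 / real j) \<le> harm ?N"
    unfolding harm_def inverse_eq_divide by (intro sum_mono2) auto
  also have "harm ?N \<le> 1 + ln (w / \<delta>)"
  proof (cases "?N = 0")
    case True
    then show ?thesis using assms delta_pos by (simp add: harm_def)
  next
    case False
    then have "ln (real ?N) \<le> ln (w / \<delta>)" using delta_pos by simp
    then show ?thesis using harm_le_one_plus_ln[of ?N] by linarith
  qed
  also have "ln (w / \<delta>) \<le> ln (w * w)"
    using mult_left_mono[OF assms(2), of w] \<open>0 < w\<close> delta_pos by simp
  also have "\<dots> = 2 * ln w" using \<open>0 < w\<close> by (simp add: ln_mult)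
  finally show ?thesis using assms by linarith
qed

lemma truncated_first_moment_le:
  assumes "\<delta> \<le> w" "1 / \<delta> \<le> w" "1 \<le> ln w"
  shows "(\<lambda>k. \<bar>chi (x - s k)\<bar> * (\<bar>x - s k\<bar> * of_bool (\<bar>x - s k\<bar> \<le> w))) summable_on UNIV \<and>
    infsum (\<lambda>k. \<bar>chi (x - s k)\<bar> * (\<bar>x - s k\<bar> * of_bool (\<bar>x - s k\<bar> \<le> w))) UNIV
      \<le> 2 * ((B * (R / \<delta> + 1) * (R + \<delta>) + 3 * C / \<delta>) * ln w)"
proof (rule node_sum_le[where s = s and \<delta> = \<delta>, OF node_gap delta_pos])
  define G where "G j = B * (R + \<delta>) * of_bool (real j * \<delta> < R)
    + C / (real j * \<delta>) * of_bool (R \<le> real j * \<delta> \<and> real j * \<delta> \<le> w)" for j :: nat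
  show "sum G F \<le> (B * (R / \<delta> + 1) * (R + \<delta>) + 3 * C / \<delta>) * ln w" if "finite F" for F
  proof -
    let ?mid = "F \<inter> {j. R \<le> real j * \<delta> \<and> real j * \<delta> \<le> w}"
    have "sum G F = B * (R + \<delta>) * card (F \<inter> {j. real j * \<delta> < R}) + C / \<delta> * (\<Sum>j\<in>?mid. 1 / real j)"
      unfolding G_def sum.distrib sum_mult_of_bool_eq[OF that] by (simp add: sum_distrib_left mult.commute)
    also have "\<dots> \<le> B * (R + \<delta>) * (R / \<delta> + 1) + C / \<delta> * (3 * ln w)"
      using sum_inverse_mid_indices_le[OF assms] card_near_indices_le B_nonneg C_nonneg R_pos delta_pos
      by (intro add_mono mult_left_mono) auto
    also have "\<dots> \<le> (B * (R / \<delta> + 1) * (R + \<delta>) + 3 * C / \<delta>) * ln w"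
    proof -
      have "0 \<le> B * (R + \<delta>) * (R / \<delta> + 1)" using B_nonneg R_pos delta_pos by simp
      then have "B * (R + \<delta>) * (R / \<delta> + 1) \<le> B * (R + \<delta>) * (R / \<delta> + 1) * ln w"
        using mult_left_mono[OF assms(3)] by simp
      moreover have "(B * (R / \<delta> + 1) * (R + \<delta>) + 3 * C / \<delta>) * ln w
          = B * (R + \<delta>) * (R / \<delta> + 1) * ln w + C / \<delta> * (3 * ln w)"
        using delta_pos by (simp add: field_simps)
      ultimately show ?thesis by linarith
    qed
    finally show ?thesis .
  qed
  show "0 \<le> \<bar>chi (x - s k)\<bar> * (\<bar>x - s k\<bar> * of_bool (\<bar>x - s k\<bar> \<le> w)) \<and>
      \<bar>chi (x - s k)\<bar> * (\<bar>x - s k\<bar> * of_bool (\<bar>x - s k\<bar> \<le> w)) \<le> G (nat \<lfloor>\<bar>x - s k\<bar> / \<delta>\<rfloor>)" for k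
  proof -
    let ?u = "x - s k" and ?j = "nat \<lfloor>\<bar>x - s k\<bar> / \<delta>\<rfloor>"
    have "\<bar>chi ?u\<bar> * \<bar>?u\<bar> \<le> B * (R + \<delta>)" if "real ?j * \<delta> < R"
      using distance_index_bounds(2)[of ?u] that bounded[of ?u] B_nonneg
      by (intro mult_mono) (auto simp: algebra_simps)
    moreover have "\<bar>chi ?u\<bar> * \<bar>?u\<bar> \<le> C / (real ?j * \<delta>)" if "R \<le> real ?j * \<delta>"
      using decay_first_moment_le distance_index_bounds(1) that by blast
    moreover have "real ?j * \<delta> \<le> w" if "\<bar>?u\<bar> \<le> w" using distance_index_bounds(1)[of ?u] that by linarith
    ultimately show ?thesis unfolding G_def using B_nonneg C_nonneg R_pos delta_pos by (auto simp: not_less)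
  qed
qed

lemma kernel_tail_le:
  assumes "R + \<delta> \<le> w" "2 * \<delta> \<le> w"
  shows "(\<lambda>k. \<bar>chi (x - s k)\<bar> * of_bool (w < \<bar>x - s k\<bar>)) summable_on UNIV \<and>
    infsum (\<lambda>k. \<bar>chi (x - s k)\<bar> * of_bool (w < \<bar>x - s k\<bar>)) UNIV \<le> 2 * (4 * C / (\<delta> * w))"
proof (rule node_sum_le[where s = s and \<delta> = \<delta>, OF node_gap delta_pos])
  define G where "G j = C / (real j * \<delta>)\<^sup>2 * of_bool (w < (real j + 1) * \<delta>)" for j :: nat
  define J where "J = nat \<lceil>w / \<delta> - 1\<rceil>"
  have w_half: "w / (2 * \<delta>) \<le> w / \<delta> - 1" "1 \<le> w / (2 * \<delta>)"
    using assms delta_pos by (auto simp: field_simps)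
  have J_ge: "w / \<delta> - 1 \<le> real J" unfolding J_def by linarith
  then have "1 \<le> J" using w_half by linarith
  show "sum G F \<le> 4 * C / (\<delta> * w)" if "finite F" for F
  proof -
    let ?far = "F \<inter> {j. w < (real j + 1) * \<delta>}"
    have "sum G F = C / \<delta>\<^sup>2 * (\<Sum>j\<in>?far. 1 / (real j)\<^sup>2)"
      unfolding G_def sum_mult_of_bool_eq[OF that]
      by (simp add: sum_distrib_left power_mult_distrib mult.commute)
    also have "\<dots> \<le> C / \<delta>\<^sup>2 * (2 / real J)"
    proof (intro mult_left_mono sum_inverse_square_le)
      show "?far \<subseteq> {J..}"
      proof
        fix j assume "j \<in> ?far"
        then have "w / \<delta> - 1 < real j" using delta_pos by (simp add: divide_less_eq algebra_simps)
        then have "\<lceil>w / \<delta> - 1\<rceil> \<le> int j" by (metis ceiling_le less_imp_le of_int_of_nat_eq)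
        then show "j \<in> {J..}" unfolding J_def by simp
      qed
    qed (use \<open>1 \<le> J\<close> C_nonneg that in auto)
    also have "\<dots> \<le> C / \<delta>\<^sup>2 * (2 / (w / (2 * \<delta>)))"
    proof (intro mult_left_mono divide_left_mono)
      show "0 < real J * (w / (2 * \<delta>))" using \<open>1 \<le> J\<close> w_half by (intro mult_pos_pos) auto
    qed (use J_ge w_half C_nonneg in auto)
    also have "\<dots> = 4 * C / (\<delta> * w)" using delta_pos by (simp add: power2_eq_square field_simps)
    finally show ?thesis .
  qed
  show "0 \<le> \<bar>chi (x - s k)\<bar> * of_bool (w < \<bar>x - s k\<bar>) \<and>
      \<bar>chi (x - s k)\<bar> * of_bool (w < \<bar>x - s k\<bar>) \<le> G (nat \<lfloor>\<bar>x - s k\<bar> / \<delta>\<rfloor>)" for k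
  proof (cases "w < \<bar>x - s k\<bar>")
    case True
    let ?j = "nat \<lfloor>\<bar>x - s k\<bar> / \<delta>\<rfloor>"
    have "w < (real ?j + 1) * \<delta>" using True distance_index_bounds(2)[of "x - s k"] by linarith
    moreover have "R \<le> real ?j * \<delta>" using calculation assms by (simp add: algebra_simps)
    ultimately show ?thesis unfolding G_def using decay_le distance_index_bounds(1) True by auto
  qed (simp add: G_def C_nonneg)
qed

lemma large_scale_bounds:
  assumes A: "2 * (B * (R / \<delta> + 1) * (R + \<delta>) + 3 * C / \<delta>) \<le> A" "8 * C / \<delta> \<le> A"
    and w: "max (max (R + \<delta>) (2 * \<delta>)) (max (1 / \<delta>) (exp 1)) \<le> w"
  shows "0 < w" and "1 \<le> ln w"
    and "(\<lambda>k. \<bar>chi (x - s k)\<bar> * (\<bar>x - s k\<bar> * of_bool (\<bar>x - s k\<bar> \<le> w))) summable_on UNIV \<and>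
      infsum (\<lambda>k. \<bar>chi (x - s k)\<bar> * (\<bar>x - s k\<bar> * of_bool (\<bar>x - s k\<bar> \<le> w))) UNIV \<le> A * ln w"
    and "(\<lambda>k. \<bar>chi (x - s k)\<bar> * of_bool (w < \<bar>x - s k\<bar>)) summable_on UNIV \<and>
      infsum (\<lambda>k. \<bar>chi (x - s k)\<bar> * of_bool (w < \<bar>x - s k\<bar>)) UNIV \<le> A / w"
proof -
  have w_ge: "R + \<delta> \<le> w" "2 * \<delta> \<le> w" "\<delta> \<le> w" "1 / \<delta> \<le> w" "exp 1 \<le> w"
    using w delta_pos by auto
  then show "0 < w" using delta_pos by linarith
  then show "1 \<le> ln w" using w_ge(5) by (metis exp_gt_zero ln_exp ln_le_cancel_iff)
  then show "(\<lambda>k. \<bar>chi (x - s k)\<bar> * (\<bar>x - s k\<bar> * of_bool (\<bar>x - s k\<bar> \<le> w))) summable_on UNIV \<and>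
      infsum (\<lambda>k. \<bar>chi (x - s k)\<bar> * (\<bar>x - s k\<bar> * of_bool (\<bar>x - s k\<bar> \<le> w))) UNIV \<le> A * ln w"
  proof -
    have "0 \<le> ln w" using \<open>1 \<le> ln w\<close> by linarith
    from mult_right_mono[OF A(1) this]
    have "2 * ((B * (R / \<delta> + 1) * (R + \<delta>) + 3 * C / \<delta>) * ln w) \<le> A * ln w"
      by (simp only: mult.assoc)
    with truncated_first_moment_le[OF w_ge(3,4) \<open>1 \<le> ln w\<close>, of x] show ?thesis
      by (blast intro: order_trans)
  qed
  show "(\<lambda>k. \<bar>chi (x - s k)\<bar> * of_bool (w < \<bar>x - s k\<bar>)) summable_on UNIV \<and>
      infsum (\<lambda>k. \<bar>chi (x - s k)\<bar> * of_bool (w < \<bar>x - s k\<bar>)) UNIV \<le> A / w"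
    using kernel_tail_le[OF w_ge(1,2), of x] divide_right_mono[OF A(2), of w] \<open>0 < w\<close> by simp
qed

end

section \<open>Modulus of continuity and cell averages\<close>

lemma abs_le_supnorm:
  fixes f :: "real^'n::finite \<Rightarrow> real"
  assumes "bounded (range f)"
  shows "\<bar>f x\<bar> \<le> supnorm f"
proof -
  have "bdd_above (range (\<lambda>x. \<bar>f x\<bar>))"
    using assms unfolding bounded_iff by (auto intro: bdd_aboveI2)
  then show ?thesis unfolding supnorm_def using cSUP_upper[of x UNIV "\<lambda>x. \<bar>f x\<bar>"] by simp
qed

lemma supnorm_nonneg:
  fixes f :: "real^'n::finite \<Rightarrow> real"
  assumes "bounded (range f)"
  shows "0 \<le> supnorm f"
  using abs_le_supnorm[OF assms, of 0] by linarith

lemma modcont_ge: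
  fixes f :: "real^'n::finite \<Rightarrow> real"
  assumes "bounded (range f)" "norm h \<le> d"
  shows "\<bar>f (x + h) - f x\<bar> \<le> modcont f d"
  unfolding modcont_def
proof (rule cSup_upper)
  show "bdd_above {\<bar>f (x + s) - f x\<bar> | x s. norm s \<le> d}"
  proof (rule bdd_aboveI)
    fix y assume "y \<in> {\<bar>f (x + s) - f x\<bar> | x s. norm s \<le> d}"
    then obtain x s where "y = \<bar>f (x + s) - f x\<bar>" by blast
    then show "y \<le> 2 * supnorm f"
      using abs_le_supnorm[OF assms(1), of x] abs_le_supnorm[OF assms(1), of "x + s"] by linarith
  qed
qed (use assms(2) in blast)

lemma modcont_nonneg:
  fixes f :: "real^'n::finite \<Rightarrow> real"
  assumes "bounded (range f)" "0 \<le> d"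
  shows "0 \<le> modcont f d"
  using modcont_ge[OF assms(1), of 0 d 0] assms(2) by simp

lemma modcont_scale_le:
  fixes f :: "real^'n::finite \<Rightarrow> real"
  assumes bounded: "bounded (range f)" and "0 < d"
  shows "\<bar>f (x + h) - f x\<bar> \<le> (1 + norm h / d) * modcont f d"
proof (cases "h = 0")
  case True
  then show ?thesis using modcont_nonneg[OF bounded, of d] \<open>0 < d\<close> by simp
next
  case False
  define m where "m = nat \<lceil>norm h / d\<rceil>"
  have "0 < norm h / d" using False \<open>0 < d\<close> by simp
  then have m_ge: "norm h / d \<le> real m" and m_le: "real m \<le> norm h / d + 1" and "0 < real m"
    unfolding m_def using of_int_ceiling_le_add_one[of "norm h / d"] by (auto simp: not_le)
  define y where "y i = x + (real i / real m) *\<^sub>R h" for i :: nat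
  have step: "\<bar>f (y (Suc i)) - f (y i)\<bar> \<le> modcont f d" for i
  proof -
    have "y (Suc i) = y i + (1 / real m) *\<^sub>R h"
      unfolding y_def by (simp add: add_divide_distrib scaleR_add_left)
    moreover have "norm ((1 / real m) *\<^sub>R h) \<le> d"
      using m_ge \<open>0 < real m\<close> \<open>0 < d\<close> by (simp add: field_simps)
    ultimately show ?thesis using modcont_ge[OF bounded] by simp
  qed
  have "f (x + h) - f x = f (y m) - f (y 0)" unfolding y_def using \<open>0 < real m\<close> by simp
  also have "\<dots> = (\<Sum>i<m. f (y (Suc i)) - f (y i))" by (rule sum_lessThan_telescope[symmetric])
  finally have "\<bar>f (x + h) - f x\<bar> \<le> (\<Sum>i<m. \<bar>f (y (Suc i)) - f (y i)\<bar>)"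
    by (metis sum_abs)
  also have "\<dots> \<le> (\<Sum>i<m. modcont f d)" by (rule sum_mono) (rule step)
  also have "\<dots> = real m * modcont f d" by simp
  also have "\<dots> \<le> (1 + norm h / d) * modcont f d"
    using m_le modcont_nonneg[OF bounded, of d] \<open>0 < d\<close> by (intro mult_right_mono) auto
  finally show ?thesis .
qed

definition cell_average ::
  "('n::finite \<Rightarrow> int \<Rightarrow> real) \<Rightarrow> real \<Rightarrow> (real^'n \<Rightarrow> real) \<Rightarrow> ('n \<Rightarrow> int) \<Rightarrow> real" where
  "cell_average t w f k = w ^ CARD('n) / cell_area t k * integral (cell t w k) f"

lemma lower_corner_in_cell:
  fixes t :: "'n::finite \<Rightarrow> int \<Rightarrow> real"
  assumes "\<And>i k. t i k < t i (k + 1)" and "0 < w"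
  shows "(\<chi> i. t i (k i) / w) \<in> cell t w k"
  unfolding cell_def mem_box_cart using assms by (simp add: less_imp_le divide_right_mono)

lemma content_cell:
  fixes t :: "'n::finite \<Rightarrow> int \<Rightarrow> real"
  assumes "\<And>i k. t i k < t i (k + 1)" and "0 < w"
  shows "Henstock_Kurzweil_Integration.content (cell t w k) = cell_area t k / w ^ CARD('n)"
proof -
  have "cell t w k \<noteq> {}" using lower_corner_in_cell[where t = t and w = w and k = k, OF assms] by blast
  then have "Henstock_Kurzweil_Integration.content (cell t w k)
      = (\<Prod>i\<in>UNIV. t i (k i + 1) / w - t i (k i) / w)"
    unfolding cell_def by (simp add: content_cbox_cart)
  also have "\<dots> = cell_area t k / w ^ CARD('n)"
    unfolding cell_area_def by (simp add: diff_divide_distrib[symmetric] prod_dividef)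
  finally show ?thesis .
qed

lemma cell_area_pos:
  fixes t :: "'n::finite \<Rightarrow> int \<Rightarrow> real"
  assumes "\<And>i k. t i k < t i (k + 1)"
  shows "0 < cell_area t k"
  unfolding cell_area_def using assms by (intro prod_pos) auto

lemma cell_average_dist_le:
  fixes t :: "'n::finite \<Rightarrow> int \<Rightarrow> real" and f :: "real^'n \<Rightarrow> real"
  assumes nodes: "\<And>i k. t i k < t i (k + 1)" and "0 < w"
    and "continuous_on UNIV f" and near: "\<And>y. y \<in> cell t w k \<Longrightarrow> \<bar>f y - c\<bar> \<le> E"
  shows "\<bar>cell_average t w f k - c\<bar> \<le> E"
proof -
  let ?Q = "cell t w k" and ?vol = "Henstock_Kurzweil_Integration.content (cell t w k)"
  define q where "q = w ^ CARD('n) / cell_area t k"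
  have "0 < q" unfolding q_def using cell_area_pos[where t = t and k = k, OF nodes] \<open>0 < w\<close> by simp
  have scale: "q * ?vol = 1"
    unfolding q_def using content_cell[where t = t and w = w and k = k, OF nodes \<open>0 < w\<close>]
      cell_area_pos[where t = t and k = k, OF nodes] \<open>0 < w\<close> by simp
  have "0 \<le> E" using near[OF lower_corner_in_cell[where t = t and w = w and k = k, OF nodes \<open>0 < w\<close>]] by linarith
  obtain a b where Q: "?Q = cbox a b" unfolding cell_def by blast
  have "(f has_integral integral ?Q f) ?Q"
    unfolding Q using \<open>continuous_on UNIV f\<close>
    by (intro integrable_integral integrable_continuous) (auto intro: continuous_on_subset)
  moreover have "((\<lambda>y. c) has_integral ?vol * c) ?Q" unfolding Q using has_integral_const[of c a b] by simp
  ultimately have "((\<lambda>y. f y - c) has_integral (integral ?Q f - ?vol * c)) (cbox a b)"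
    unfolding Q by (rule has_integral_diff)
  from has_integral_bound[OF \<open>0 \<le> E\<close> this] near
  have "\<bar>integral ?Q f - ?vol * c\<bar> \<le> E * ?vol" unfolding Q by simp
  moreover have "cell_average t w f k - c = q * (integral ?Q f - ?vol * c)"
  proof -
    have "q * v = 1 \<Longrightarrow> q * i - c = q * (i - v * c)" for q v i :: real
      by (simp add: right_diff_distrib mult.assoc[symmetric])
    then show ?thesis unfolding cell_average_def q_def[symmetric] using scale by blast
  qed
  ultimately have "\<bar>cell_average t w f k - c\<bar> \<le> q * (E * ?vol)"
    using \<open>0 < q\<close> by (simp add: abs_mult)
  also have "\<dots> = E" using scale by (simp add: mult.left_commute)
  finally show ?thesis .
qed

lemma cell_dist_le:
  fixes t :: "'n::finite \<Rightarrow> int \<Rightarrow> real"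
  assumes "\<And>i k. t i (k + 1) - t i k \<le> \<Delta>" and "0 < w" and "y \<in> cell t w k"
  shows "norm (y - x) \<le> ((\<Sum>i\<in>UNIV. \<bar>w * x $ i - t i (k i)\<bar>) + real CARD('n) * \<Delta>) / w"
proof -
  have "\<bar>(y - x) $ i\<bar> \<le> (\<bar>w * x $ i - t i (k i)\<bar> + \<Delta>) / w" for i
  proof -
    have "t i (k i) / w \<le> y $ i" "y $ i \<le> t i (k i + 1) / w"
      using assms(3) unfolding cell_def mem_box_cart by auto
    moreover have "t i (k i + 1) / w - t i (k i) / w \<le> \<Delta> / w"
      using assms(1,2) by (simp add: diff_divide_distrib[symmetric] divide_right_mono)
    ultimately have "\<bar>y $ i - t i (k i) / w\<bar> \<le> \<Delta> / w" by linarith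
    moreover have "\<bar>t i (k i) / w - x $ i\<bar> = \<bar>w * x $ i - t i (k i)\<bar> / w"
    proof -
      have "t i (k i) / w - x $ i = - (w * x $ i - t i (k i)) / w" using \<open>0 < w\<close> by (simp add: field_simps)
      then show ?thesis using \<open>0 < w\<close> by simp
    qed
    moreover have "\<bar>(y - x) $ i\<bar> \<le> \<bar>y $ i - t i (k i) / w\<bar> + \<bar>t i (k i) / w - x $ i\<bar>" by simp
    ultimately show ?thesis by (simp add: add_divide_distrib)
  qed
  then have "(\<Sum>i\<in>UNIV. \<bar>(y - x) $ i\<bar>) \<le> (\<Sum>i\<in>UNIV. (\<bar>w * x $ i - t i (k i)\<bar> + \<Delta>) / w)"
    by (intro sum_mono)
  with norm_le_l1_cart[of "y - x"]
  have "norm (y - x) \<le> (\<Sum>i\<in>UNIV. (\<bar>w * x $ i - t i (k i)\<bar> + \<Delta>) / w)" by linarith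
  also have "\<dots> = ((\<Sum>i\<in>UNIV. \<bar>w * x $ i - t i (k i)\<bar>) + real CARD('n) * \<Delta>) / w"
    by (simp add: sum_divide_distrib[symmetric] sum.distrib)
  finally show ?thesis .
qed

definition error_weight :: "real \<Rightarrow> real \<Rightarrow> real \<Rightarrow> real \<Rightarrow> real" where
  "error_weight a b w u = a * (\<bar>u\<bar> * of_bool (\<bar>u\<bar> \<le> w)) + b * of_bool (w < \<bar>u\<bar>)"

lemma error_weight_nonneg: "0 \<le> a \<Longrightarrow> 0 \<le> b \<Longrightarrow> 0 \<le> error_weight a b w u"
  unfolding error_weight_def by simp

lemma error_weight_sum_le:
  fixes s :: "int \<Rightarrow> real"
  assumes "0 \<le> a" "0 \<le> b"
    and moment: "(\<lambda>k. \<bar>chi (z - s k)\<bar> * (\<bar>z - s k\<bar> * of_bool (\<bar>z - s k\<bar> \<le> w))) summable_on UNIV \<and>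
      infsum (\<lambda>k. \<bar>chi (z - s k)\<bar> * (\<bar>z - s k\<bar> * of_bool (\<bar>z - s k\<bar> \<le> w))) UNIV \<le> m"
    and tail: "(\<lambda>k. \<bar>chi (z - s k)\<bar> * of_bool (w < \<bar>z - s k\<bar>)) summable_on UNIV \<and>
      infsum (\<lambda>k. \<bar>chi (z - s k)\<bar> * of_bool (w < \<bar>z - s k\<bar>)) UNIV \<le> \<tau>"
  shows "(\<lambda>k. \<bar>chi (z - s k)\<bar> * error_weight a b w (z - s k)) summable_on UNIV \<and>
    infsum (\<lambda>k. \<bar>chi (z - s k)\<bar> * error_weight a b w (z - s k)) UNIV \<le> a * m + b * \<tau>"
proof -
  let ?m = "\<lambda>k. \<bar>chi (z - s k)\<bar> * (\<bar>z - s k\<bar> * of_bool (\<bar>z - s k\<bar> \<le> w))"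
  let ?\<tau> = "\<lambda>k. \<bar>chi (z - s k)\<bar> * of_bool (w < \<bar>z - s k\<bar>)"
  have split: "(\<lambda>k. \<bar>chi (z - s k)\<bar> * error_weight a b w (z - s k)) = (\<lambda>k. a * ?m k + b * ?\<tau> k)"
    by (simp add: fun_eq_iff error_weight_def algebra_simps)
  have "((\<lambda>k. a * ?m k + b * ?\<tau> k) has_sum (a * infsum ?m UNIV + b * infsum ?\<tau> UNIV)) UNIV"
    using moment tail by (intro has_sum_add has_sum_cmult_right) auto
  moreover have "a * infsum ?m UNIV + b * infsum ?\<tau> UNIV \<le> a * m + b * \<tau>"
    using assms by (intro add_mono mult_left_mono) auto
  ultimately show ?thesis unfolding split by (simp add: has_sum_iff)
qed

lemma cell_average_near_error_le:
  fixes t :: "'n::finite \<Rightarrow> int \<Rightarrow> real" and f :: "real^'n \<Rightarrow> real"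
  assumes nodes: "\<And>i k. t i k < t i (k + 1)" and spacing: "\<And>i k. t i (k + 1) - t i k \<le> \<Delta>"
    and "0 < w" "0 < d" and cont: "continuous_on UNIV f" and bdd: "bounded (range f)"
  shows "\<bar>cell_average t w f k - f x\<bar>
    \<le> (1 + ((\<Sum>i\<in>UNIV. \<bar>w * x $ i - t i (k i)\<bar>) + real CARD('n) * \<Delta>) / (w * d)) * modcont f d"
proof (rule cell_average_dist_le[where t = t and w = w and k = k, OF nodes \<open>0 < w\<close> cont])
  fix y assume "y \<in> cell t w k"
  then have "norm (y - x) / d \<le> ((\<Sum>i\<in>UNIV. \<bar>w * x $ i - t i (k i)\<bar>) + real CARD('n) * \<Delta>) / (w * d)"
    using cell_dist_le[where t = t and \<Delta> = \<Delta>, OF spacing \<open>0 < w\<close>] \<open>0 < d\<close>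
    by (simp add: divide_right_mono flip: divide_divide_eq_left)
  moreover have "\<bar>f y - f x\<bar> \<le> (1 + norm (y - x) / d) * modcont f d"
    using modcont_scale_le[OF bdd \<open>0 < d\<close>, of x "y - x"] by simp
  moreover have "0 \<le> modcont f d" using modcont_nonneg[OF bdd] \<open>0 < d\<close> by simp
  ultimately show "\<bar>f y - f x\<bar>
      \<le> (1 + ((\<Sum>i\<in>UNIV. \<bar>w * x $ i - t i (k i)\<bar>) + real CARD('n) * \<Delta>) / (w * d)) * modcont f d"
    by (meson add_left_mono mult_right_mono order_trans)
qed

text \<open>Cells with \<open>\<bar>w x\<^sub>i - t\<^sub>k\<^sub>i\<bar> \<le> w\<close> in every coordinate are controlled by the modulus of
  continuity; for all others the trivial bound \<open>2 \<parallel>f\<parallel>\<^sub>\<infinity>\<close> is charged to an offending coordinate.\<close>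

lemma cell_average_error_le:
  fixes t :: "'n::finite \<Rightarrow> int \<Rightarrow> real" and f :: "real^'n \<Rightarrow> real"
  assumes nodes: "\<And>i k. t i k < t i (k + 1)" and spacing: "\<And>i k. t i (k + 1) - t i k \<le> \<Delta>"
    and "0 < w" "0 < d" and cont: "continuous_on UNIV f" and bdd: "bounded (range f)"
  shows "\<bar>cell_average t w f k - f x\<bar> \<le> (1 + real CARD('n) * \<Delta> / (w * d)) * modcont f d
    + (\<Sum>i\<in>UNIV. error_weight (modcont f d / (w * d)) (2 * supnorm f) w (w * x $ i - t i (k i)))"
proof -
  let ?\<omega> = "modcont f d" and ?S = "supnorm f" and ?u = "\<lambda>i. w * x $ i - t i (k i)"
  let ?E = "\<lambda>i. error_weight (?\<omega> / (w * d)) (2 * ?S) w (?u i)"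
  have "0 \<le> ?\<omega>" using modcont_nonneg[OF bdd] \<open>0 < d\<close> by simp
  have "0 \<le> ?S" using supnorm_nonneg[OF bdd] .
  have "0 \<le> \<Delta>" using nodes[of undefined 0] spacing[of undefined 0] by linarith
  have E_nonneg: "0 \<le> ?E i" for i
    using \<open>0 \<le> ?\<omega>\<close> \<open>0 \<le> ?S\<close> \<open>0 < w\<close> \<open>0 < d\<close> by (intro error_weight_nonneg) auto
  show ?thesis
  proof (cases "\<forall>i. \<bar>?u i\<bar> \<le> w")
    case True
    then have "\<bar>?u i\<bar> \<le> w" "\<not> w < \<bar>?u i\<bar>" for i by (simp_all add: not_less)
    then have "(\<Sum>i\<in>UNIV. ?E i) = ?\<omega> / (w * d) * (\<Sum>i\<in>UNIV. \<bar>?u i\<bar>)"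
      unfolding error_weight_def sum_distrib_left by (intro sum.cong) auto
    then show ?thesis
      using cell_average_near_error_le[where t = t and \<Delta> = \<Delta>, OF nodes spacing \<open>0 < w\<close> \<open>0 < d\<close> cont bdd,
          of k x]
      by (simp add: algebra_simps add_divide_distrib)
  next
    case False
    then obtain i\<^sub>0 where "w < \<bar>?u i\<^sub>0\<bar>" by (auto simp: not_le)
    then have "2 * ?S \<le> ?E i\<^sub>0" by (simp add: error_weight_def)
    also have "\<dots> \<le> (\<Sum>i\<in>UNIV. ?E i)" by (rule member_le_sum) (use E_nonneg in auto)
    finally have "2 * ?S \<le> (\<Sum>i\<in>UNIV. ?E i)" .
    moreover have "\<bar>cell_average t w f k - 0\<bar> \<le> ?S"
      by (rule cell_average_dist_le[where t = t and w = w and k = k, OF nodes \<open>0 < w\<close> cont])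
        (use abs_le_supnorm[OF bdd] in simp)
    moreover have "\<bar>f x\<bar> \<le> ?S" by (rule abs_le_supnorm[OF bdd])
    moreover have "0 \<le> (1 + real CARD('n) * \<Delta> / (w * d)) * ?\<omega>"
      using \<open>0 \<le> ?\<omega>\<close> \<open>0 \<le> \<Delta>\<close> \<open>0 < w\<close> \<open>0 < d\<close> by simp
    ultimately show ?thesis by linarith
  qed
qed

section \<open>Product kernels\<close>

lemma weighted_average_dev_le:
  fixes X a E :: "'a \<Rightarrow> real"
  assumes X: "(X has_sum 1) A" and XE: "(\<lambda>p. \<bar>X p\<bar> * E p) summable_on A"
    and dev: "\<And>p. p \<in> A \<Longrightarrow> \<bar>a p - c\<bar> \<le> E p"
  shows "\<bar>infsum (\<lambda>p. X p * a p) A - c\<bar> \<le> infsum (\<lambda>p. \<bar>X p\<bar> * E p) A"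
proof -
  let ?D = "\<lambda>p. X p * (a p - c)"
  have D_le: "norm (?D p) \<le> \<bar>X p\<bar> * E p" if "p \<in> A" for p
    using dev[OF that] by (simp add: abs_mult mult_left_mono)
  have "(\<lambda>p. norm (?D p)) summable_on A"
    by (rule summable_on_comparison_test[OF XE]) (use D_le in auto)
  then have D: "?D summable_on A" using summable_on_iff_abs_summable_on_real by blast
  have "((\<lambda>p. ?D p + X p * c) has_sum (infsum ?D A + 1 * c)) A"
    by (intro has_sum_add has_sum_cmult_left X has_sum_infsum D)
  moreover have "(\<lambda>p. ?D p + X p * c) = (\<lambda>p. X p * a p)" by (simp add: fun_eq_iff right_diff_distrib)
  ultimately have "infsum (\<lambda>p. X p * a p) A = infsum ?D A + c" by (simp add: infsumI)
  moreover have "norm (infsum ?D A) \<le> infsum (\<lambda>p. \<bar>X p\<bar> * E p) A"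
    using norm_infsum_le[OF has_sum_infsum[OF D] has_sum_infsum[OF XE] D_le] .
  ultimately show ?thesis by simp
qed

lemma has_sum_prod_coordinates:
  fixes g :: "'n::finite \<Rightarrow> 'a::countable \<Rightarrow> real"
  assumes "\<And>i. g i summable_on UNIV"
  shows "((\<lambda>p. \<Prod>i\<in>UNIV. g i (p i)) has_sum (\<Prod>i\<in>UNIV. infsum (g i) UNIV)) UNIV"
proof -
  have abs: "Infinite_Sum.abs_summable_on (g i) UNIV" for i
    using assms summable_on_iff_abs_summable_on_real by blast
  then have "Infinite_Set_Sum.abs_summable_on (g i) UNIV" for i
    using abs_summable_equivalent by blast
  then have "Infinite_Set_Sum.abs_summable_on (\<lambda>p. \<Prod>i\<in>UNIV. g i (p i)) (PiE UNIV (\<lambda>_. UNIV))"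
    by (intro abs_summable_on_prod_PiE) auto
  then have "(\<lambda>p. \<Prod>i\<in>UNIV. g i (p i)) summable_on UNIV"
    using abs_summable_equivalent summable_on_iff_abs_summable_on_real by fastforce
  moreover have "infsum (\<lambda>p. \<Prod>i\<in>UNIV. g i (p i)) (PiE UNIV (\<lambda>_. UNIV)) = (\<Prod>i\<in>UNIV. infsum (g i) UNIV)"
    by (rule infsum_prod_PiE_abs) (use abs in auto)
  ultimately show ?thesis by (simp add: has_sum_iff)
qed

lemma prod_coordinates_le:
  fixes g :: "'n::finite \<Rightarrow> 'a::countable \<Rightarrow> real" and i :: 'n
  assumes nonneg: "\<And>j k. 0 \<le> g j k" and summable: "\<And>j. g j summable_on UNIV"
    and others: "\<And>j. j \<noteq> i \<Longrightarrow> infsum (g j) UNIV \<le> M" and at_i: "infsum (g i) UNIV \<le> b"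
    and "1 \<le> M"
  shows "(\<lambda>p. \<Prod>j\<in>UNIV. g j (p j)) summable_on UNIV \<and>
    infsum (\<lambda>p. \<Prod>j\<in>UNIV. g j (p j)) UNIV \<le> b * M ^ CARD('n)"
proof -
  have "0 \<le> infsum (g j) UNIV" for j using nonneg by (simp add: infsum_nonneg)
  then have "(\<Prod>j\<in>UNIV. infsum (g j) UNIV) \<le> (\<Prod>j\<in>UNIV. if j = i then b else M)"
    using others at_i by (intro prod_mono) auto
  also have "\<dots> = b * (\<Prod>j\<in>UNIV - {i}. M)"
    by (subst prod.remove[of UNIV i]) (auto intro!: prod.cong)
  also have "\<dots> \<le> b * M ^ CARD('n)"
  proof (rule mult_left_mono)
    show "(\<Prod>j\<in>UNIV - {i}. M) \<le> M ^ CARD('n)"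
      using \<open>1 \<le> M\<close> by (simp add: power_increasing card_Diff_singleton)
    show "0 \<le> b" using \<open>0 \<le> infsum (g i) UNIV\<close> at_i by linarith
  qed
  finally show ?thesis using has_sum_prod_coordinates[where g = g, OF summable] by (simp add: has_sum_iff)
qed

lemma error_constants_le:
  fixes n \<Delta> A L \<omega> S w :: real
  assumes "0 \<le> n" "0 \<le> \<Delta>" "0 \<le> A" "1 \<le> L" "0 \<le> \<omega>" "0 \<le> S" "0 < w"
  shows "(1 + n * \<Delta> / L) * \<omega> + n * (\<omega> / L * (A * L) + 2 * S * (A / w))
    \<le> (1 + n * (\<Delta> + 3 * A)) * (\<omega> + S / w)"
proof -
  have "0 \<le> n * A" "0 \<le> n * \<Delta>" using assms by simp_all
  moreover have "n * \<Delta> / L \<le> n * \<Delta> / 1"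
    using \<open>0 \<le> n * \<Delta>\<close> \<open>1 \<le> L\<close> by (intro divide_left_mono) auto
  ultimately have c1: "1 + n * \<Delta> / L + n * A \<le> 1 + n * (\<Delta> + 3 * A)"
    and c2: "2 * n * A \<le> 1 + n * (\<Delta> + 3 * A)"
    by (simp_all add: distrib_left mult.commute)
  have "0 \<le> S / w" using assms by simp
  have "(1 + n * \<Delta> / L + n * A) * \<omega> + (2 * n * A) * (S / w) \<le>
      (1 + n * (\<Delta> + 3 * A)) * \<omega> + (1 + n * (\<Delta> + 3 * A)) * (S / w)"
    using mult_right_mono[OF c1 \<open>0 \<le> \<omega>\<close>] mult_right_mono[OF c2 \<open>0 \<le> S / w\<close>] by (rule add_mono)
  moreover have "\<omega> / L * (A * L) = A * \<omega>" using assms by simp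
  ultimately show ?thesis by (simp add: algebra_simps)
qed

locale product_kernel =
  fixes t :: "'n::finite \<Rightarrow> int \<Rightarrow> real" and chi :: "real \<Rightarrow> real" and \<Delta> M :: real
  assumes nodes: "\<And>i k. t i k < t i (k + 1)" and spacing: "\<And>i k. t i (k + 1) - t i k \<le> \<Delta>"
    and partition_of_unity: "\<And>i z. ((\<lambda>k. chi (z - t i k)) has_sum 1) UNIV"
    and sum_abs_le: "\<And>i z. (\<lambda>k. \<bar>chi (z - t i k)\<bar>) summable_on UNIV \<and>
      infsum (\<lambda>k. \<bar>chi (z - t i k)\<bar>) UNIV \<le> M"
    and M_ge_1: "1 \<le> M"
begin

lemma Delta_nonneg: "0 \<le> \<Delta>"
  using nodes[of undefined 0] spacing[of undefined 0] by linarith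

definition kernel_at :: "real^'n \<Rightarrow> ('n \<Rightarrow> int) \<Rightarrow> real" where
  "kernel_at y p = (\<Prod>i\<in>UNIV. chi (y $ i - t i (p i)))"

lemma kernel_at_has_sum: "(kernel_at y has_sum 1) UNIV"
proof -
  have "(\<lambda>k. chi (y $ i - t i k)) summable_on UNIV" "infsum (\<lambda>k. chi (y $ i - t i k)) UNIV = 1" for i
    using partition_of_unity[where i = i and z = "y $ i"] by (auto simp: has_sum_iff)
  then show ?thesis
    using has_sum_prod_coordinates[where g = "\<lambda>i k. chi (y $ i - t i k)"] unfolding kernel_at_def by simp
qed

lemma sum_abs_kernel_at_le:
  "(\<lambda>p. \<bar>kernel_at y p\<bar>) summable_on UNIV \<and> infsum (\<lambda>p. \<bar>kernel_at y p\<bar>) UNIV \<le> M ^ CARD('n)"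
proof -
  let ?g = "\<lambda>i k. \<bar>chi (y $ i - t i k)\<bar>"
  have "(\<Prod>i\<in>UNIV. infsum (?g i) UNIV) \<le> (\<Prod>i\<in>(UNIV :: 'n set). M)"
    using sum_abs_le by (intro prod_mono) (auto intro: infsum_nonneg)
  moreover have "((\<lambda>p. \<bar>kernel_at y p\<bar>) has_sum (\<Prod>i\<in>UNIV. infsum (?g i) UNIV)) UNIV"
    using has_sum_prod_coordinates[where g = ?g] sum_abs_le unfolding kernel_at_def by (simp add: abs_prod)
  ultimately show ?thesis by (simp add: has_sum_iff)
qed

lemma weighted_sum_abs_kernel_at_le:
  assumes h_nonneg: "\<And>u. 0 \<le> h u"
    and weighted: "\<And>z. (\<lambda>k. \<bar>chi (z - t i k)\<bar> * h (z - t i k)) summable_on UNIV \<and>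
      infsum (\<lambda>k. \<bar>chi (z - t i k)\<bar> * h (z - t i k)) UNIV \<le> b"
  shows "(\<lambda>p. \<bar>kernel_at y p\<bar> * h (y $ i - t i (p i))) summable_on UNIV \<and>
    infsum (\<lambda>p. \<bar>kernel_at y p\<bar> * h (y $ i - t i (p i))) UNIV \<le> b * M ^ CARD('n)"
proof -
  define g where "g j = (\<lambda>k. \<bar>chi (y $ j - t j k)\<bar> * (if j = i then h (y $ j - t j k) else 1))" for j
  have "(\<Prod>j\<in>UNIV. g j (p j)) = \<bar>kernel_at y p\<bar> * h (y $ i - t i (p i))" for p
    unfolding g_def kernel_at_def prod.distrib by (simp add: abs_prod prod.delta)
  moreover have "(\<lambda>p. \<Prod>j\<in>UNIV. g j (p j)) summable_on UNIV \<and>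
      infsum (\<lambda>p. \<Prod>j\<in>UNIV. g j (p j)) UNIV \<le> b * M ^ CARD('n)"
  proof (rule prod_coordinates_le[where i = i])
    show "g j summable_on UNIV" for j
      by (cases "j = i") (use weighted[of "y $ i"] sum_abs_le in \<open>auto simp: g_def\<close>)
    show "infsum (g j) UNIV \<le> M" if "j \<noteq> i" for j using that sum_abs_le by (simp add: g_def)
  qed (use h_nonneg weighted[of "y $ i"] M_ge_1 in \<open>auto simp: g_def\<close>)
  ultimately show ?thesis by simp
qed

lemma kantorovich_eq:
  "kantorovich t (\<lambda>y. \<Prod>i\<in>UNIV. chi (y $ i)) w f x
    = infsum (\<lambda>p. kernel_at (w *\<^sub>R x) p * cell_average t w f p) UNIV"
  unfolding kantorovich_def kernel_at_def cell_average_def node_vec_def by (simp add: mult.assoc)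

lemma sum_abs_kernel_at_error_le:
  assumes "0 \<le> c" "0 \<le> a" "0 \<le> b"
    and weighted: "\<And>i z. (\<lambda>k. \<bar>chi (z - t i k)\<bar> * error_weight a b w (z - t i k)) summable_on UNIV \<and>
      infsum (\<lambda>k. \<bar>chi (z - t i k)\<bar> * error_weight a b w (z - t i k)) UNIV \<le> \<beta>"
  shows "(\<lambda>p. \<bar>kernel_at y p\<bar> * (c + (\<Sum>i\<in>UNIV. error_weight a b w (y $ i - t i (p i))))) summable_on UNIV \<and>
    infsum (\<lambda>p. \<bar>kernel_at y p\<bar> * (c + (\<Sum>i\<in>UNIV. error_weight a b w (y $ i - t i (p i))))) UNIV
      \<le> (c + real CARD('n) * \<beta>) * M ^ CARD('n)"
proof (rule nonneg_summable_on_infsum_le)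
  let ?W = "\<lambda>i p. \<bar>kernel_at y p\<bar> * error_weight a b w (y $ i - t i (p i))"
  have W: "?W i summable_on UNIV \<and> infsum (?W i) UNIV \<le> \<beta> * M ^ CARD('n)" for i
    by (rule weighted_sum_abs_kernel_at_le) (use error_weight_nonneg assms weighted in auto)
  fix F :: "('n \<Rightarrow> int) set" assume "finite F"
  have "(\<Sum>p\<in>F. \<bar>kernel_at y p\<bar> * (c + (\<Sum>i\<in>UNIV. error_weight a b w (y $ i - t i (p i)))))
      = c * (\<Sum>p\<in>F. \<bar>kernel_at y p\<bar>) + (\<Sum>i\<in>UNIV. \<Sum>p\<in>F. ?W i p)"
    by (simp add: distrib_left sum.distrib sum_distrib_left sum_distrib_right sum.swap[of _ F] mult_ac)
  also have "\<dots> \<le> c * M ^ CARD('n) + (\<Sum>i\<in>(UNIV :: 'n set). \<beta> * M ^ CARD('n))"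
  proof (intro add_mono mult_left_mono sum_mono \<open>0 \<le> c\<close>)
    show "(\<Sum>p\<in>F. \<bar>kernel_at y p\<bar>) \<le> M ^ CARD('n)"
      using finite_sum_le_infsum[OF _ \<open>finite F\<close>] sum_abs_kernel_at_le[of y] by fastforce
    show "(\<Sum>p\<in>F. ?W i p) \<le> \<beta> * M ^ CARD('n)" for i
      using finite_sum_le_infsum[OF _ \<open>finite F\<close>] W[of i] assms
      by (fastforce intro: mult_nonneg_nonneg error_weight_nonneg)
  qed
  also have "\<dots> = (c + real CARD('n) * \<beta>) * M ^ CARD('n)" by (simp add: algebra_simps)
  finally show "(\<Sum>p\<in>F. \<bar>kernel_at y p\<bar> * (c + (\<Sum>i\<in>UNIV. error_weight a b w (y $ i - t i (p i)))))
      \<le> (c + real CARD('n) * \<beta>) * M ^ CARD('n)" .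
qed (use assms in \<open>auto intro!: mult_nonneg_nonneg add_nonneg_nonneg sum_nonneg error_weight_nonneg\<close>)

lemma kantorovich_error_le:
  fixes f :: "real^'n \<Rightarrow> real"
  assumes "0 < w" "1 \<le> ln w" "0 \<le> A"
    and moment: "\<And>i z. (\<lambda>k. \<bar>chi (z - t i k)\<bar> * (\<bar>z - t i k\<bar> * of_bool (\<bar>z - t i k\<bar> \<le> w))) summable_on UNIV \<and>
      infsum (\<lambda>k. \<bar>chi (z - t i k)\<bar> * (\<bar>z - t i k\<bar> * of_bool (\<bar>z - t i k\<bar> \<le> w))) UNIV \<le> A * ln w"
    and tail: "\<And>i z. (\<lambda>k. \<bar>chi (z - t i k)\<bar> * of_bool (w < \<bar>z - t i k\<bar>)) summable_on UNIV \<and>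
      infsum (\<lambda>k. \<bar>chi (z - t i k)\<bar> * of_bool (w < \<bar>z - t i k\<bar>)) UNIV \<le> A / w"
    and cont: "continuous_on UNIV f" and bdd: "bounded (range f)"
  shows "\<bar>kantorovich t (\<lambda>y. \<Prod>i\<in>UNIV. chi (y $ i)) w f x - f x\<bar>
    \<le> (1 + real CARD('n) * (\<Delta> + 3 * A)) * M ^ CARD('n) * (modcont f (ln w / w) + supnorm f / w)"
proof -
  define L where "L = ln w"
  define \<omega> where "\<omega> = modcont f (L / w)"
  define S where "S = supnorm f"
  define n where "n = real CARD('n)"
  define c where "c = (1 + n * \<Delta> / L) * \<omega>"
  let ?ew = "error_weight (\<omega> / L) (2 * S) w"
  have "0 < L" using assms unfolding L_def by linarith
  then have "0 < L / w" using \<open>0 < w\<close> by simp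
  have "0 \<le> \<omega>" unfolding \<omega>_def using modcont_nonneg[OF bdd] \<open>0 < L / w\<close> by simp
  have "0 \<le> S" unfolding S_def by (rule supnorm_nonneg[OF bdd])
  have "0 \<le> n" unfolding n_def by simp
  have "0 \<le> c" unfolding c_def using \<open>0 \<le> \<omega>\<close> \<open>0 \<le> n\<close> Delta_nonneg \<open>0 < L\<close> by simp
  have pointwise: "\<bar>cell_average t w f p - f x\<bar> \<le> c + (\<Sum>i\<in>UNIV. ?ew ((w *\<^sub>R x) $ i - t i (p i)))" for p
    using cell_average_error_le[where t = t and \<Delta> = \<Delta>, OF nodes spacing \<open>0 < w\<close> \<open>0 < L / w\<close> cont bdd,
        of p x] \<open>0 < w\<close>
    by (simp add: c_def \<omega>_def S_def n_def)
  have "(\<lambda>k. \<bar>chi (z - t i k)\<bar> * ?ew (z - t i k)) summable_on UNIV \<and>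
      infsum (\<lambda>k. \<bar>chi (z - t i k)\<bar> * ?ew (z - t i k)) UNIV \<le> \<omega> / L * (A * L) + 2 * S * (A / w)" for i z
    using \<open>0 \<le> \<omega>\<close> \<open>0 < L\<close> \<open>0 \<le> S\<close> moment tail unfolding L_def
    by (intro error_weight_sum_le) auto
  then have total: "(\<lambda>p. \<bar>kernel_at (w *\<^sub>R x) p\<bar> * (c + (\<Sum>i\<in>UNIV. ?ew ((w *\<^sub>R x) $ i - t i (p i))))) summable_on UNIV \<and>
      infsum (\<lambda>p. \<bar>kernel_at (w *\<^sub>R x) p\<bar> * (c + (\<Sum>i\<in>UNIV. ?ew ((w *\<^sub>R x) $ i - t i (p i))))) UNIV
        \<le> (c + n * (\<omega> / L * (A * L) + 2 * S * (A / w))) * M ^ CARD('n)"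
    unfolding n_def using \<open>0 \<le> c\<close> \<open>0 \<le> \<omega>\<close> \<open>0 < L\<close> \<open>0 \<le> S\<close>
    by (intro sum_abs_kernel_at_error_le) auto
  have "\<bar>kantorovich t (\<lambda>y. \<Prod>i\<in>UNIV. chi (y $ i)) w f x - f x\<bar>
      \<le> (c + n * (\<omega> / L * (A * L) + 2 * S * (A / w))) * M ^ CARD('n)"
    unfolding kantorovich_eq using weighted_average_dev_le[OF kernel_at_has_sum _ pointwise] total by fastforce
  also have "\<dots> \<le> (1 + n * (\<Delta> + 3 * A)) * M ^ CARD('n) * (\<omega> + S / w)"
    unfolding c_def using error_constants_le[of n \<Delta> A L \<omega> S w] M_ge_1
      \<open>0 \<le> n\<close> Delta_nonneg \<open>0 \<le> A\<close> \<open>1 \<le> ln w\<close> \<open>0 \<le> \<omega>\<close> \<open>0 \<le> S\<close> \<open>0 < w\<close>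
    unfolding L_def by (simp add: mult_right_mono mult.commute mult.left_commute)
  finally show ?thesis unfolding L_def \<omega>_def S_def n_def .
qed

end

lemma decaying_product_kernel_error_estimate:
  fixes t :: "'n::finite \<Rightarrow> int \<Rightarrow> real"
  assumes nodes: "\<And>i k. t i k < t i (k + 1)" and spacing: "\<And>i k. t i (k + 1) - t i k \<le> \<Delta>"
    and partition_of_unity: "\<And>i z. ((\<lambda>k. chi (z - t i k)) has_sum 1) UNIV"
    and kernel: "\<And>i. decaying_kernel (t i) \<delta> chi B C R"
  shows "\<exists>K>0. \<forall>f :: real^'n \<Rightarrow> real. continuous_on UNIV f \<and> bounded (range f) \<longrightarrow>
    (\<forall>\<^sub>F w in at_top. \<forall>x. \<bar>kantorovich t (\<lambda>y. \<Prod>i\<in>UNIV. chi (y $ i)) w f x - f x\<bar>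
      \<le> K * (modcont f (ln w / w) + supnorm f / w))"
proof -
  interpret decaying_kernel "t undefined" \<delta> chi B C R by (rule kernel)
  define M where "M = max 1 (2 * (B * (R / \<delta> + 1) + 2 * C / \<delta>\<^sup>2))"
  define A where "A = max (2 * (B * (R / \<delta> + 1) * (R + \<delta>) + 3 * C / \<delta>)) (8 * C / \<delta>)"
  define K where "K = (1 + real CARD('n) * (\<Delta> + 3 * A)) * M ^ CARD('n)"
  interpret product_kernel t chi \<Delta> M
  proof
    show "(\<lambda>k. \<bar>chi (z - t i k)\<bar>) summable_on UNIV \<and> infsum (\<lambda>k. \<bar>chi (z - t i k)\<bar>) UNIV \<le> M" for i z
      using decaying_kernel.sum_abs_kernel_le[OF kernel[of i], of z] unfolding M_def by linarith
  qed (auto simp: M_def intro: nodes spacing partition_of_unity)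
  have "0 \<le> A" unfolding A_def using C_nonneg delta_pos by (simp add: le_max_iff_disj)
  then have "0 < K" unfolding K_def using M_ge_1 Delta_nonneg by (intro mult_pos_pos add_pos_nonneg) auto
  moreover have "\<forall>\<^sub>F w in at_top. \<forall>x. \<bar>kantorovich t (\<lambda>y. \<Prod>i\<in>UNIV. chi (y $ i)) w f x - f x\<bar>
      \<le> K * (modcont f (ln w / w) + supnorm f / w)"
    if "continuous_on UNIV f" "bounded (range f)" for f :: "real^'n \<Rightarrow> real"
    using eventually_ge_at_top[of "max (max (R + \<delta>) (2 * \<delta>)) (max (1 / \<delta>) (exp 1))"]
  proof eventually_elim
    case (elim w)
    note bounds = decaying_kernel.large_scale_bounds[OF kernel max.cobounded1 max.cobounded2 elim,
        folded A_def]
    show ?case unfolding K_def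
      by (intro allI kantorovich_error_le bounds \<open>0 \<le> A\<close> that)
  qed
  ultimately show ?thesis by blast
qed

theorem mainTheorem1:
  fixes t :: "'n::finite \<Rightarrow> int \<Rightarrow> real" and chi :: "real \<Rightarrow> real"
  assumes "node_seq t"
    and "\<forall>i. kernel1 (t i) chi"
    and "chi \<in> O[at_infinity](\<lambda>x. 1 / x ^ 2)"
    and "\<forall>i. moment1 (t i) chi 1 = \<infinity>"
  shows "\<exists>K>0. \<forall>f :: real^'n \<Rightarrow> real.
           uniformly_continuous_on UNIV f \<and> bounded (range f) \<longrightarrow>
           (\<forall>\<^sub>F w in at_top. \<forall>x.
              \<bar>kantorovich t (\<lambda>y. \<Prod>i\<in>UNIV. chi (y $ i)) w f x - f x\<bar>
                \<le> K * (modcont f (ln w / w) + supnorm f / w))"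
proof -
  obtain \<delta> \<Delta> where "0 < \<delta>" and spacing: "\<And>i k. \<delta> \<le> t i (k + 1) - t i k \<and> t i (k + 1) - t i k \<le> \<Delta>"
    using assms(1) unfolding node_seq_def by blast
  obtain B where "\<And>u. \<bar>chi u\<bar> \<le> B" using kernel1_bounded assms(2) by blast
  moreover obtain C R where "0 < R" "\<And>u. R \<le> \<bar>u\<bar> \<Longrightarrow> \<bar>chi u\<bar> \<le> C / u\<^sup>2"
    using bigo_inverse_square_decay[OF assms(3)] by blast
  ultimately have "decaying_kernel (t i) \<delta> chi B C R" for i
    using spacing \<open>0 < \<delta>\<close> by unfold_locales (auto simp: algebra_simps)
  moreover have "((\<lambda>k. chi (z - t i k)) has_sum 1) UNIV" for i z
    using assms(2) unfolding kernel1_def by blast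
  moreover have "t i k < t i (k + 1)" for i k using spacing[of i k] \<open>0 < \<delta>\<close> by linarith
  ultimately show ?thesis
    using decaying_product_kernel_error_estimate[of t \<Delta> chi \<delta> B C R] spacing
    by (meson uniformly_continuous_imp_continuous)
qed

end
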